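(* For every $m$, the first $\varepsilon\tau$-theorem holds for $\varepsilon\tau(\mathbf{LC}_m)$.
   Context: $\mathbf{LC}_m$ is the intermediate propositional logic axiomatized over intuitionistic propositional logic by the schemas $\mathit{Lin}$: $(A\to B)\lor(B\to A)$ and $B_m$: $(A_1\to A_2)\lor(A_2\to A_3)\lor\dots\lor(A_m\to A_{m+1})$ (the $m$-valued Gödel logic). $\varepsilon\tau$-terms: $\varepsilon x\,A(x)$, $\tau x\,A(x)$ for formulas $A(x)$. Critical formulas: $A(t)\to A(\varepsilon x\,A(x))$ and $A(\tau x\,A(x))\to A(t)$. $\vdash_{\varepsilon\tau(\mathbf{L})}B$: $B$ derivable in the quantifier-free language with $\varepsilon\tau$-terms from critical formulas using substitution instances of theorems of $\mathbf{L}$ and modus ponens; $\vdash_{\mathbf{L}}$ is the same without critical formulas. $\varepsilon\tau(\mathbf{L})$ has the first $\varepsilon\tau$-theorem if whenever $\vdash_{\varepsilon\tau(\mathbf{L})}A(e_1,\dots,e_n)$ for $\varepsilon$- or $\tau$-terms $e_i$, there are $\varepsilon\tau$-free terms $t_i^j$ with $\vdash_{\mathbf{L}}A(t_1^1,\dots,t_n^1)\lor\dots\lor A(t_1^k,\dots,t_n^k)$. *)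

theory Defs
  imports Main
begin

text \<open>Free variables are FVar x (x a natural number); bound variables are de Bruijn
  indices BVar i; Eps A and Tau A bind BVar 0 in A. Function symbols 'f (constants
  are 0-ary), predicate symbols 'p.\<close>

datatype ('f, 'p) tm =
    FVar nat
  | BVar nat
  | Fn 'f "('f, 'p) tm list"
  | Eps "('f, 'p) fm"
  | Tau "('f, 'p) fm"
and ('f, 'p) fm =
    Bot
  | Atom 'p "('f, 'p) tm list"
  | And "('f, 'p) fm" "('f, 'p) fm"
  | Or "('f, 'p) fm" "('f, 'p) fm"
  | Imp "('f, 'p) fm" "('f, 'p) fm"

primrec inst_tm :: "nat \<Rightarrow> ('f, 'p) tm \<Rightarrow> ('f, 'p) tm \<Rightarrow> ('f, 'p) tm"
  and inst_fm :: "nat \<Rightarrow> ('f, 'p) tm \<Rightarrow> ('f, 'p) fm \<Rightarrow> ('f, 'p) fm" where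
  "inst_tm k u (FVar x) = FVar x"
| "inst_tm k u (BVar i) = (if i = k then u else BVar i)"
| "inst_tm k u (Fn f ts) = Fn f (map (inst_tm k u) ts)"
| "inst_tm k u (Eps A) = Eps (inst_fm (Suc k) u A)"
| "inst_tm k u (Tau A) = Tau (inst_fm (Suc k) u A)"
| "inst_fm k u Bot = Bot"
| "inst_fm k u (Atom p ts) = Atom p (map (inst_tm k u) ts)"
| "inst_fm k u (And A B) = And (inst_fm k u A) (inst_fm k u B)"
| "inst_fm k u (Or A B) = Or (inst_fm k u A) (inst_fm k u B)"
| "inst_fm k u (Imp A B) = Imp (inst_fm k u A) (inst_fm k u B)"

text \<open>closed_tm k t: all bound indices in t refer to one of k enclosing binders.
  closed_tm 0 t means t is a well-formed (locally closed) term.\<close>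
primrec closed_tm :: "nat \<Rightarrow> ('f, 'p) tm \<Rightarrow> bool"
  and closed_fm :: "nat \<Rightarrow> ('f, 'p) fm \<Rightarrow> bool" where
  "closed_tm k (FVar x) = True"
| "closed_tm k (BVar i) = (i < k)"
| "closed_tm k (Fn f ts) = list_all (closed_tm k) ts"
| "closed_tm k (Eps A) = closed_fm (Suc k) A"
| "closed_tm k (Tau A) = closed_fm (Suc k) A"
| "closed_fm k Bot = True"
| "closed_fm k (Atom p ts) = list_all (closed_tm k) ts"
| "closed_fm k (And A B) = (closed_fm k A \<and> closed_fm k B)"
| "closed_fm k (Or A B) = (closed_fm k A \<and> closed_fm k B)"
| "closed_fm k (Imp A B) = (closed_fm k A \<and> closed_fm k B)"

primrec etfree_tm :: "('f, 'p) tm \<Rightarrow> bool"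
  and etfree_fm :: "('f, 'p) fm \<Rightarrow> bool" where
  "etfree_tm (FVar x) = True"
| "etfree_tm (BVar i) = True"
| "etfree_tm (Fn f ts) = list_all etfree_tm ts"
| "etfree_tm (Eps A) = False"
| "etfree_tm (Tau A) = False"
| "etfree_fm Bot = True"
| "etfree_fm (Atom p ts) = list_all etfree_tm ts"
| "etfree_fm (And A B) = (etfree_fm A \<and> etfree_fm B)"
| "etfree_fm (Or A B) = (etfree_fm A \<and> etfree_fm B)"
| "etfree_fm (Imp A B) = (etfree_fm A \<and> etfree_fm B)"

primrec subst_tm :: "(nat \<Rightarrow> ('f, 'p) tm) \<Rightarrow> ('f, 'p) tm \<Rightarrow> ('f, 'p) tm"
  and subst_fm :: "(nat \<Rightarrow> ('f, 'p) tm) \<Rightarrow> ('f, 'p) fm \<Rightarrow> ('f, 'p) fm" where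
  "subst_tm \<sigma> (FVar x) = \<sigma> x"
| "subst_tm \<sigma> (BVar i) = BVar i"
| "subst_tm \<sigma> (Fn f ts) = Fn f (map (subst_tm \<sigma>) ts)"
| "subst_tm \<sigma> (Eps A) = Eps (subst_fm \<sigma> A)"
| "subst_tm \<sigma> (Tau A) = Tau (subst_fm \<sigma> A)"
| "subst_fm \<sigma> Bot = Bot"
| "subst_fm \<sigma> (Atom p ts) = Atom p (map (subst_tm \<sigma>) ts)"
| "subst_fm \<sigma> (And A B) = And (subst_fm \<sigma> A) (subst_fm \<sigma> B)"
| "subst_fm \<sigma> (Or A B) = Or (subst_fm \<sigma> A) (subst_fm \<sigma> B)"
| "subst_fm \<sigma> (Imp A B) = Imp (subst_fm \<sigma> A) (subst_fm \<sigma> B)"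

text \<open>A(t_1,...,t_n): replace the free variables xs (pairwise distinct) by the terms ts.\<close>
definition subst_list :: "nat list \<Rightarrow> ('f, 'p) tm list \<Rightarrow> nat \<Rightarrow> ('f, 'p) tm" where
  "subst_list xs ts = (\<lambda>x. case map_of (zip xs ts) x of Some t \<Rightarrow> t | None \<Rightarrow> FVar x)"

fun bigOr :: "('f, 'p) fm list \<Rightarrow> ('f, 'p) fm" where
  "bigOr [] = Bot"
| "bigOr [A] = A"
| "bigOr (A # B # Bs) = Or A (bigOr (B # Bs))"

datatype pf = PV nat | PBot | PAnd pf pf | POr pf pf | PImp pf pf

fun pbigOr :: "pf list \<Rightarrow> pf" where
  "pbigOr [] = PBot"
| "pbigOr [A] = A"
| "pbigOr (A # B # Bs) = POr A (pbigOr (B # Bs))"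

text \<open>Theorems of LC_m: intuitionistic propositional logic (Hilbert-style axioms,
  modus ponens) plus the schemas Lin and B_m.\<close>
inductive LC :: "nat \<Rightarrow> pf \<Rightarrow> bool" for m :: nat where
  ax1: "LC m (PImp A (PImp B A))"
| ax2: "LC m (PImp (PImp A (PImp B C)) (PImp (PImp A B) (PImp A C)))"
| ax3: "LC m (PImp (PAnd A B) A)"
| ax4: "LC m (PImp (PAnd A B) B)"
| ax5: "LC m (PImp A (PImp B (PAnd A B)))"
| ax6: "LC m (PImp A (POr A B))"
| ax7: "LC m (PImp B (POr A B))"
| ax8: "LC m (PImp (PImp A C) (PImp (PImp B C) (PImp (POr A B) C)))"
| ax9: "LC m (PImp PBot A)"
| lin: "LC m (POr (PImp A B) (PImp B A))"
| bm: "length As = Suc m \<Longrightarrow>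
       LC m (pbigOr (map (\<lambda>i. PImp (As ! i) (As ! Suc i)) [0..<m]))"
| mp: "LC m (PImp A B) \<Longrightarrow> LC m A \<Longrightarrow> LC m B"

primrec psub :: "(nat \<Rightarrow> ('f, 'p) fm) \<Rightarrow> pf \<Rightarrow> ('f, 'p) fm" where
  "psub \<sigma> (PV n) = \<sigma> n"
| "psub \<sigma> PBot = Bot"
| "psub \<sigma> (PAnd A B) = And (psub \<sigma> A) (psub \<sigma> B)"
| "psub \<sigma> (POr A B) = Or (psub \<sigma> A) (psub \<sigma> B)"
| "psub \<sigma> (PImp A B) = Imp (psub \<sigma> A) (psub \<sigma> B)"

inductive deriv :: "bool \<Rightarrow> nat \<Rightarrow> ('f, 'p) fm \<Rightarrow> bool" for crit :: bool and m :: nat where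
  crit_eps: "crit \<Longrightarrow> closed_fm 1 A \<Longrightarrow> closed_tm 0 t \<Longrightarrow>
     deriv crit m (Imp (inst_fm 0 t A) (inst_fm 0 (Eps A) A))"
| crit_tau: "crit \<Longrightarrow> closed_fm 1 A \<Longrightarrow> closed_tm 0 t \<Longrightarrow>
     deriv crit m (Imp (inst_fm 0 (Tau A) A) (inst_fm 0 t A))"
| inst: "LC m \<phi> \<Longrightarrow> (\<forall>n. closed_fm 0 (\<sigma> n)) \<Longrightarrow> deriv crit m (psub \<sigma> \<phi>)"
| mp: "deriv crit m (Imp A B) \<Longrightarrow> deriv crit m A \<Longrightarrow> deriv crit m B"

abbreviation deriv_et :: "nat \<Rightarrow> ('f, 'p) fm \<Rightarrow> bool" where
  "deriv_et m B \<equiv> deriv True m B"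

abbreviation deriv_L :: "nat \<Rightarrow> ('f, 'p) fm \<Rightarrow> bool" where
  "deriv_L m B \<equiv> deriv False m B"

definition is_et_term :: "('f, 'p) tm \<Rightarrow> bool" where
  "is_et_term e \<longleftrightarrow> (\<exists>A. e = Eps A \<or> e = Tau A)"

end

theory Submission
  imports Defs "HOL-Library.More_List"
begin

text \<open>Suppose no disjunction of \<epsilon>-free instances \<open>A(t\<^sub>1) \<or> \<dots> \<or> A(t\<^sub>k)\<close> were
  derivable in \<open>LC\<^sub>m\<close>. These disjunctions are closed under \<open>\<or>\<close> up to provable implication, so
  a Lindenbaum argument yields a prime theory \<open>T\<close> containing none of them. By \<open>B\<^sub>m\<close> and
  primeness, among any closed \<open>X\<^sub>0, \<dots>, X\<^sub>m\<close> some \<open>X\<^sub>i \<longrightarrow> X\<^sub>i\<^sub>+\<^sub>1\<close> lies in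
  \<open>T\<close>, so every family of closed formulas indexed by \<epsilon>-free terms has a greatest and a least
  member with respect to \<open>X \<longrightarrow> Y \<in> T\<close>. Replacing each \<open>\<epsilon>x A(x)\<close> by an \<epsilon>-free
  \<open>d\<close> making \<open>A(d)\<close> greatest, and each \<open>\<tau>x A(x)\<close> by one making it least, sends
  critical formulas into \<open>T\<close>, substitution instances of \<open>LC\<^sub>m\<close>-theorems to such instances,
  and respects modus ponens. Hence the image of \<open>A(e\<^sub>1, \<dots>, e\<^sub>n)\<close>, an \<epsilon>-free instance
  of \<open>A\<close>, lies in \<open>T\<close>: a contradiction.\<close>

lemma closed_mono:
  fixes t :: "('f, 'p) tm" and F :: "('f, 'p) fm"
  shows "closed_tm k t \<Longrightarrow> k \<le> k' \<Longrightarrow> closed_tm k' t"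
    and "closed_fm k F \<Longrightarrow> k \<le> k' \<Longrightarrow> closed_fm k' F"
  by (induct t and F arbitrary: k k' and k k') (auto simp: list_all_iff)

lemma closed_inst:
  fixes t :: "('f, 'p) tm" and F :: "('f, 'p) fm"
  assumes "closed_tm 0 u"
  shows "closed_tm (Suc k) t \<Longrightarrow> closed_tm k (inst_tm k u t)"
    and "closed_fm (Suc k) F \<Longrightarrow> closed_fm k (inst_fm k u F)"
  by (induct t and F arbitrary: k and k)
    (auto simp: list_all_iff closed_mono(1)[OF assms])

lemma closed_subst:
  fixes t :: "('f, 'p) tm" and F :: "('f, 'p) fm"
  assumes "\<And>x. closed_tm 0 (\<sigma> x)"
  shows "closed_tm k t \<Longrightarrow> closed_tm k (subst_tm \<sigma> t)"
    and "closed_fm k F \<Longrightarrow> closed_fm k (subst_fm \<sigma> F)"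
  by (induct t and F arbitrary: k and k)
    (auto simp: list_all_iff closed_mono(1)[OF assms])

lemma closed_psub: "(\<And>n. closed_fm 0 (\<sigma> n)) \<Longrightarrow> closed_fm 0 (psub \<sigma> \<phi>)"
  by (induction \<phi>) auto

lemma closed_bigOr: "list_all (closed_fm k) Fs \<Longrightarrow> closed_fm k (bigOr Fs)"
  by (induction Fs rule: bigOr.induct) auto

lemma psub_pbigOr: "psub \<sigma> (pbigOr \<phi>s) = bigOr (map (psub \<sigma>) \<phi>s)"
  by (induction \<phi>s rule: pbigOr.induct) auto

lemma deriv_closed: "deriv crit m F \<Longrightarrow> closed_fm 0 F"
  by (induction rule: deriv.induct) (auto simp: closed_inst closed_psub)

lemma LC_imp_refl: "LC m (PImp A A)"
  by (meson LC.ax1 LC.ax2 LC.mp)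

lemma deriv_LC_instance:
  assumes "LC m \<phi>" and "list_all (closed_fm 0) Fs"
  shows "deriv crit m (psub (nth_default Bot Fs) \<phi>)"
  using assms by (intro deriv.inst) (auto simp: nth_default_def list_all_length)

lemma deriv_imp_refl: "closed_fm 0 X \<Longrightarrow> deriv crit m (Imp X X)"
  using deriv_LC_instance[OF LC_imp_refl[of m "PV 0"], of "[X]" crit] by (simp add: nth_default_def)

lemma deriv_K: "closed_fm 0 X \<Longrightarrow> closed_fm 0 Y \<Longrightarrow> deriv crit m (Imp X (Imp Y X))"
  using deriv_LC_instance[OF LC.ax1[of m "PV 0" "PV 1"], of "[X, Y]" crit] by (simp add: nth_default_def)

lemma deriv_S:
  "closed_fm 0 X \<Longrightarrow> closed_fm 0 Y \<Longrightarrow> closed_fm 0 Z \<Longrightarrow>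
    deriv crit m (Imp (Imp X (Imp Y Z)) (Imp (Imp X Y) (Imp X Z)))"
  using deriv_LC_instance[OF LC.ax2[of m "PV 0" "PV 1" "PV 2"], of "[X, Y, Z]" crit]
  by (simp add: nth_default_def)

lemma deriv_disjI1: "closed_fm 0 X \<Longrightarrow> closed_fm 0 Y \<Longrightarrow> deriv crit m (Imp X (Or X Y))"
  using deriv_LC_instance[OF LC.ax6[of m "PV 0" "PV 1"], of "[X, Y]" crit] by (simp add: nth_default_def)

lemma deriv_disjI2: "closed_fm 0 X \<Longrightarrow> closed_fm 0 Y \<Longrightarrow> deriv crit m (Imp Y (Or X Y))"
  using deriv_LC_instance[OF LC.ax7[of m "PV 1" "PV 0"], of "[X, Y]" crit] by (simp add: nth_default_def)

lemma deriv_disjE: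
  "closed_fm 0 X \<Longrightarrow> closed_fm 0 Y \<Longrightarrow> closed_fm 0 Z \<Longrightarrow>
    deriv crit m (Imp (Imp X Z) (Imp (Imp Y Z) (Imp (Or X Y) Z)))"
  using deriv_LC_instance[OF LC.ax8[of m "PV 0" "PV 2" "PV 1"], of "[X, Y, Z]" crit]
  by (simp add: nth_default_def)

lemma deriv_Bot_imp: "closed_fm 0 X \<Longrightarrow> deriv crit m (Imp Bot X)"
  using deriv_LC_instance[OF LC.ax9[of m "PV 0"], of "[X]" crit] by (simp add: nth_default_def)

lemma deriv_Bm:
  assumes "\<And>i. i \<le> m \<Longrightarrow> closed_fm 0 (s i)"
  shows "deriv crit m (bigOr (map (\<lambda>i. Imp (s i) (s (Suc i))) [0..<m]))"
proof -
  have "LC m (pbigOr (map (\<lambda>i. PImp (map PV [0..<Suc m] ! i) (map PV [0..<Suc m] ! Suc i)) [0..<m]))"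
    by (rule LC.bm) simp
  also have "map (\<lambda>i. PImp (map PV [0..<Suc m] ! i) (map PV [0..<Suc m] ! Suc i)) [0..<m]
      = map (\<lambda>i. PImp (PV i) (PV (Suc i))) [0..<m]"
    by (simp del: upt_Suc)
  finally have "deriv crit m (psub (nth_default Bot (map s [0..<Suc m]))
      (pbigOr (map (\<lambda>i. PImp (PV i) (PV (Suc i))) [0..<m])))"
    using assms by (intro deriv_LC_instance) (auto simp: list_all_iff)
  moreover have "map (psub (nth_default Bot (map s [0..<Suc m])) \<circ> (\<lambda>i. PImp (PV i) (PV (Suc i)))) [0..<m]
      = map (\<lambda>i. Imp (s i) (s (Suc i))) [0..<m]"
    by (simp add: nth_default_def del: upt_Suc)
  ultimately show ?thesis
    by (simp add: psub_pbigOr del: upt_Suc)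
qed

inductive deriv_from :: "nat \<Rightarrow> ('f, 'p) fm set \<Rightarrow> ('f, 'p) fm \<Rightarrow> bool" for m H where
  hyp: "F \<in> H \<Longrightarrow> deriv_from m H F"
| derivable: "deriv_L m F \<Longrightarrow> deriv_from m H F"
| mp: "deriv_from m H (Imp A B) \<Longrightarrow> deriv_from m H A \<Longrightarrow> deriv_from m H B"

lemma deriv_from_closed: "deriv_from m H F \<Longrightarrow> (\<And>G. G \<in> H \<Longrightarrow> closed_fm 0 G) \<Longrightarrow> closed_fm 0 F"
  by (induction rule: deriv_from.induct) (auto dest: deriv_closed)

lemma deriv_from_mono: "deriv_from m H F \<Longrightarrow> H \<subseteq> H' \<Longrightarrow> deriv_from m H' F"
  by (induction rule: deriv_from.induct) (auto intro: deriv_from.intros)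

lemma deriv_from_empty: "deriv_from m {} F \<Longrightarrow> deriv_L m F"
  by (induction rule: deriv_from.induct) (auto intro: deriv.mp)

lemma deriv_from_finite_hyps:
  "deriv_from m H F \<Longrightarrow> \<exists>H0. finite H0 \<and> H0 \<subseteq> H \<and> deriv_from m H0 F"
proof (induction rule: deriv_from.induct)
  case (hyp F)
  then show ?case by (intro exI[of _ "{F}"]) (auto intro: deriv_from.hyp)
next
  case (derivable F)
  then show ?case by (intro exI[of _ "{}"]) (auto intro: deriv_from.derivable)
next
  case (mp A B)
  then obtain H1 H2 where "finite H1" "H1 \<subseteq> H" "deriv_from m H1 (Imp A B)"
    and "finite H2" "H2 \<subseteq> H" "deriv_from m H2 A"
    by blast
  then show ?case
    by (intro exI[of _ "H1 \<union> H2"]) (auto intro: deriv_from.mp deriv_from_mono)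
qed

lemma deriv_from_deduction:
  assumes "deriv_from m (insert A H) B" and "closed_fm 0 A" and "\<And>G. G \<in> H \<Longrightarrow> closed_fm 0 G"
  shows "deriv_from m H (Imp A B)"
  using assms(1)
proof (induction rule: deriv_from.induct)
  case (hyp F)
  then consider "F = A" | "F \<in> H"
    by blast
  then show ?case
  proof cases
    case 1
    then show ?thesis using assms(2) by (auto intro: deriv_from.derivable deriv_imp_refl)
  next
    case 2
    then show ?thesis
      using assms(2,3) by (meson deriv_K deriv_from.hyp deriv_from.mp deriv_from.derivable)
  qed
next
  case (derivable F)
  then show ?case
    using assms(2) deriv_closed by (meson deriv_K deriv_from.mp deriv_from.derivable)
next
  case (mp C B)
  have "closed_fm 0 C" and "closed_fm 0 B"
    using deriv_from_closed[OF mp(1)] assms(2,3) by auto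
  then show ?case
    using mp assms(2) by (meson deriv_S deriv_from.mp deriv_from.derivable)
qed

lemma deriv_from_imp_trans:
  assumes "deriv_from m H (Imp A B)" and "deriv_from m H (Imp B C)"
    and "\<And>G. G \<in> H \<Longrightarrow> closed_fm 0 G"
  shows "deriv_from m H (Imp A C)"
proof (rule deriv_from_deduction)
  show "deriv_from m (insert A H) C"
    using assms(1,2) by (meson deriv_from.hyp deriv_from.mp deriv_from_mono insertI1 subset_insertI)
  show "closed_fm 0 A"
    using deriv_from_closed[OF assms(1)] assms(3) by simp
qed (use assms(3) in blast)

lemma deriv_from_disjE:
  assumes "deriv_from m H (Imp X Z)" and "deriv_from m H (Imp Y Z)"
    and "\<And>G. G \<in> H \<Longrightarrow> closed_fm 0 G"
  shows "deriv_from m H (Imp (Or X Y) Z)"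
proof -
  have "closed_fm 0 X" "closed_fm 0 Y" "closed_fm 0 Z"
    using deriv_from_closed[OF assms(1)] deriv_from_closed[OF assms(2)] assms(3) by auto
  then show ?thesis
    using assms(1,2) by (meson deriv_disjE deriv_from.derivable deriv_from.mp)
qed

lemma deriv_from_disj_mono:
  assumes "deriv_from m H (Imp B X)" and "deriv_from m H (Imp C Y)"
    and "\<And>G. G \<in> H \<Longrightarrow> closed_fm 0 G"
  shows "deriv_from m H (Imp (Or B C) (Or X Y))"
proof -
  have "closed_fm 0 X" "closed_fm 0 Y"
    using deriv_from_closed[OF assms(1)] deriv_from_closed[OF assms(2)] assms(3) by auto
  then have "deriv_from m H (Imp X (Or X Y))" "deriv_from m H (Imp Y (Or X Y))"
    by (simp_all add: deriv_disjI1 deriv_disjI2 deriv_from.derivable)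
  then show ?thesis
    using assms by (intro deriv_from_disjE) (auto intro: deriv_from_imp_trans)
qed

lemma deriv_from_Union_chain:
  assumes "deriv_from m (\<Union>\<C>) F" and "\<C> \<noteq> {}" and "subset.chain \<A> \<C>"
  obtains S where "S \<in> \<C>" and "deriv_from m S F"
proof -
  obtain H where "finite H" "H \<subseteq> \<Union>\<C>" "deriv_from m H F"
    using deriv_from_finite_hyps[OF assms(1)] by blast
  moreover obtain S where "S \<in> \<C>" "H \<subseteq> S"
    using finite_subset_Union_chain[OF \<open>finite H\<close> \<open>H \<subseteq> \<Union>\<C>\<close> assms(2,3)] by blast
  ultimately show thesis
    using that deriv_from_mono[OF \<open>deriv_from m H F\<close> \<open>H \<subseteq> S\<close>] by blast
qed

lemma deriv_imp_bigOr:
  assumes "X \<in> set Fs" and "list_all (closed_fm 0) Fs"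
  shows "deriv_L m (Imp X (bigOr Fs))"
  using assms
proof (induction Fs rule: bigOr.induct)
  case (3 A B Bs)
  have closed: "closed_fm 0 A" "closed_fm 0 (bigOr (B # Bs))"
    using "3.prems"(2) closed_bigOr[of 0 "B # Bs"] by auto
  show ?case
  proof (cases "X = A")
    case True
    then show ?thesis using closed deriv_disjI1 by fastforce
  next
    case False
    then have "deriv_from m {} (Imp X (bigOr (B # Bs)))"
      using 3 by (auto intro: deriv_from.derivable)
    moreover have "deriv_from m {} (Imp (bigOr (B # Bs)) (Or A (bigOr (B # Bs))))"
      using closed by (auto intro: deriv_from.derivable deriv_disjI2)
    ultimately show ?thesis
      by (auto dest: deriv_from_imp_trans intro: deriv_from_empty)
  qed
qed (auto intro: deriv_imp_refl)

lemma deriv_bigOr_imp: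
  assumes "\<And>X. X \<in> set Fs \<Longrightarrow> deriv_L m (Imp X Z)" and "closed_fm 0 Z"
  shows "deriv_L m (Imp (bigOr Fs) Z)"
  using assms(1)
proof (induction Fs rule: bigOr.induct)
  case (3 A B Bs)
  then show ?case
    by (auto intro: deriv_from_empty deriv_from_disjE deriv_from.derivable)
qed (use assms(2) deriv_Bot_imp in auto)

lemma deriv_Or_bigOr_append:
  assumes "list_all (closed_fm 0) (Fs @ Gs)"
  shows "deriv_L m (Imp (Or (bigOr Fs) (bigOr Gs)) (bigOr (Fs @ Gs)))"
proof -
  have "closed_fm 0 (bigOr (Fs @ Gs))"
    using assms by (rule closed_bigOr)
  then have "deriv_L m (Imp (bigOr Hs) (bigOr (Fs @ Gs)))" if "set Hs \<subseteq> set (Fs @ Gs)" for Hs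
    using that assms by (intro deriv_bigOr_imp deriv_imp_bigOr) auto
  then show ?thesis
    by (auto intro: deriv_from_empty deriv_from_disjE deriv_from.derivable)
qed

section \<open>Prime theories\<close>

lemma ex_least_of_bounded_chains:
  assumes "x0 \<in> S" and chains: "\<And>s. (\<And>i. s i \<in> S) \<Longrightarrow> \<exists>i<n. R (s i) (s (Suc i))"
  shows "\<exists>x\<in>S. \<forall>y\<in>S. R x y"
proof (rule ccontr)
  assume "\<not> ?thesis"
  then obtain h where h: "\<And>x. x \<in> S \<Longrightarrow> h x \<in> S \<and> \<not> R x (h x)"
    by metis
  define s where "s i = (h ^^ i) x0" for i
  have s_in: "s i \<in> S" for i
    by (induction i) (simp_all add: s_def assms(1) h)
  then obtain i where "R (s i) (s (Suc i))"
    using chains by blast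
  then show False
    using h[OF s_in] by (simp add: s_def)
qed

lemma ex_greatest_of_bounded_chains:
  assumes "x0 \<in> S" and chains: "\<And>s. (\<And>i. s i \<in> S) \<Longrightarrow> \<exists>i<n. R (s i) (s (Suc i))"
  shows "\<exists>x\<in>S. \<forall>y\<in>S. R y x"
proof (rule ex_least_of_bounded_chains[where R = "\<lambda>x y. R y x", OF assms(1)])
  fix s :: "nat \<Rightarrow> 'a"
  assume "\<And>i. s i \<in> S"
  then obtain i where "i < n" "R (s (n - i)) (s (n - Suc i))"
    using chains[of "\<lambda>i. s (n - i)"] by auto
  moreover from \<open>i < n\<close> have "n - i = Suc (n - Suc i)"
    by simp
  ultimately show "\<exists>j<n. R (s (Suc j)) (s j)"
    by (intro exI[of _ "n - Suc i"]) auto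
qed

locale prime_theory =
  fixes m :: nat and T :: "('f, 'p) fm set"
  assumes closed: "F \<in> T \<Longrightarrow> closed_fm 0 F"
    and deriv_from_mem: "deriv_from m T F \<Longrightarrow> closed_fm 0 F \<Longrightarrow> F \<in> T"
    and prime: "Or B C \<in> T \<Longrightarrow> B \<in> T \<or> C \<in> T"
    and Bot_not_mem: "Bot \<notin> T"
begin

lemma derivable_mem: "deriv_L m F \<Longrightarrow> F \<in> T"
  by (simp add: deriv_closed deriv_from.derivable deriv_from_mem)

lemma mp_mem: "Imp A B \<in> T \<Longrightarrow> A \<in> T \<Longrightarrow> B \<in> T"
  using closed by (meson closed_fm.simps(5) deriv_from.hyp deriv_from.mp deriv_from_mem)

lemma bigOr_mem: "bigOr Fs \<in> T \<Longrightarrow> \<exists>F\<in>set Fs. F \<in> T"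
  by (induction Fs rule: bigOr.induct) (auto dest: prime simp: Bot_not_mem)

lemma ex_imp_step_mem:
  assumes "\<And>i. closed_fm 0 (s i)"
  shows "\<exists>i<m. Imp (s i) (s (Suc i)) \<in> T"
proof -
  have "bigOr (map (\<lambda>i. Imp (s i) (s (Suc i))) [0..<m]) \<in> T"
    using assms by (intro derivable_mem deriv_Bm)
  then show ?thesis
    using bigOr_mem by fastforce
qed

lemma ex_greatest_mem:
  assumes "X0 \<in> S" and "\<And>F. F \<in> S \<Longrightarrow> closed_fm 0 F"
  shows "\<exists>X\<in>S. \<forall>Y\<in>S. Imp Y X \<in> T"
  using assms(1)
  by (rule ex_greatest_of_bounded_chains[where n = m]) (simp add: assms(2) ex_imp_step_mem)

lemma ex_least_mem:
  assumes "X0 \<in> S" and "\<And>F. F \<in> S \<Longrightarrow> closed_fm 0 F"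
  shows "\<exists>X\<in>S. \<forall>Y\<in>S. Imp X Y \<in> T"
  using assms(1)
  by (rule ex_least_of_bounded_chains[where n = m]) (simp add: assms(2) ex_imp_step_mem)

end

lemma ex_maximal_theory_avoiding:
  assumes "\<And>\<delta>. \<delta> \<in> \<Delta> \<Longrightarrow> \<not> deriv_L m \<delta>"
  obtains T where "\<And>F. F \<in> T \<Longrightarrow> closed_fm 0 F"
    and "\<And>\<delta>. \<delta> \<in> \<Delta> \<Longrightarrow> \<not> deriv_from m T \<delta>"
    and "\<And>F. closed_fm 0 F \<Longrightarrow> F \<notin> T \<Longrightarrow> \<exists>\<delta>\<in>\<Delta>. deriv_from m T (Imp F \<delta>)"
proof -
  define \<T> where "\<T> = {S. (\<forall>F\<in>S. closed_fm 0 F) \<and> (\<forall>\<delta>\<in>\<Delta>. \<not> deriv_from m S \<delta>)}"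
  have "\<not> deriv_from m {} \<delta>" if "\<delta> \<in> \<Delta>" for \<delta>
    using assms[OF that] deriv_from_empty by blast
  then have "{} \<in> \<T>"
    by (simp add: \<T>_def)
  have "\<exists>T\<in>\<T>. \<forall>S\<in>\<T>. T \<subseteq> S \<longrightarrow> S = T"
  proof (rule subset_Zorn_nonempty)
    show "\<T> \<noteq> {}"
      using \<open>{} \<in> \<T>\<close> by blast
  next
    fix \<C> assume chain: "\<C> \<noteq> {}" "subset.chain \<T> \<C>"
    have "\<not> deriv_from m (\<Union>\<C>) \<delta>" if "\<delta> \<in> \<Delta>" for \<delta>
    proof
      assume "deriv_from m (\<Union>\<C>) \<delta>"
      then obtain S where "S \<in> \<C>" "deriv_from m S \<delta>"
        using deriv_from_Union_chain[OF _ chain] by blast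
      moreover have "S \<in> \<T>"
        using \<open>S \<in> \<C>\<close> chain(2) by (auto simp: subset_chain_def)
      ultimately show False
        using that by (simp add: \<T>_def)
    qed
    then show "\<Union>\<C> \<in> \<T>"
      using chain(2) by (auto simp: \<T>_def subset_chain_def)
  qed
  then obtain T where "T \<in> \<T>" and maximal: "\<And>S. S \<in> \<T> \<Longrightarrow> T \<subseteq> S \<Longrightarrow> S = T"
    by blast
  then have closed_T: "\<And>F. F \<in> T \<Longrightarrow> closed_fm 0 F"
    and avoids: "\<And>\<delta>. \<delta> \<in> \<Delta> \<Longrightarrow> \<not> deriv_from m T \<delta>"
    by (simp_all add: \<T>_def)
  show thesis
  proof (rule that[OF closed_T avoids])
    fix F assume F: "closed_fm 0 F" "F \<notin> T"
    then have "insert F T \<notin> \<T>"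
      using maximal[of "insert F T"] by blast
    then obtain \<delta> where "\<delta> \<in> \<Delta>" "deriv_from m (insert F T) \<delta>"
      using closed_T F(1) by (auto simp: \<T>_def)
    then show "\<exists>\<delta>\<in>\<Delta>. deriv_from m T (Imp F \<delta>)"
      using deriv_from_deduction[OF _ F(1) closed_T] by blast
  qed
qed

lemma lindenbaum:
  assumes "\<Delta> \<noteq> {}" and closed: "\<And>\<delta>. \<delta> \<in> \<Delta> \<Longrightarrow> closed_fm 0 \<delta>"
    and underivable: "\<And>\<delta>. \<delta> \<in> \<Delta> \<Longrightarrow> \<not> deriv_L m \<delta>"
    and disj_closed: "\<And>\<delta>1 \<delta>2. \<delta>1 \<in> \<Delta> \<Longrightarrow> \<delta>2 \<in> \<Delta> \<Longrightarrow> \<exists>\<delta>\<in>\<Delta>. deriv_L m (Imp (Or \<delta>1 \<delta>2) \<delta>)"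
  obtains T where "prime_theory m T" and "\<Delta> \<inter> T = {}"
proof -
  obtain T where closed_T: "\<And>F. F \<in> T \<Longrightarrow> closed_fm 0 F"
    and avoids: "\<And>\<delta>. \<delta> \<in> \<Delta> \<Longrightarrow> \<not> deriv_from m T \<delta>"
    and refutes: "\<And>F. closed_fm 0 F \<Longrightarrow> F \<notin> T \<Longrightarrow> \<exists>\<delta>\<in>\<Delta>. deriv_from m T (Imp F \<delta>)"
    using ex_maximal_theory_avoiding[OF underivable] by blast
  have "prime_theory m T"
  proof
    show "F \<in> T" if F: "deriv_from m T F" "closed_fm 0 F" for F
    proof (rule ccontr)
      assume "F \<notin> T"
      then obtain \<delta> where "\<delta> \<in> \<Delta>" "deriv_from m T (Imp F \<delta>)"
        using refutes F(2) by blast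
      then show False
        using avoids deriv_from.mp[OF _ F(1)] by blast
    qed
  next
    fix B C assume "Or B C \<in> T"
    show "B \<in> T \<or> C \<in> T"
    proof (rule ccontr)
      assume "\<not> (B \<in> T \<or> C \<in> T)"
      moreover have "closed_fm 0 B" "closed_fm 0 C"
        using closed_T[OF \<open>Or B C \<in> T\<close>] by auto
      ultimately obtain \<delta>1 \<delta>2 where "\<delta>1 \<in> \<Delta>" "deriv_from m T (Imp B \<delta>1)"
        and "\<delta>2 \<in> \<Delta>" "deriv_from m T (Imp C \<delta>2)"
        using refutes by metis
      moreover obtain \<delta> where "\<delta> \<in> \<Delta>" "deriv_L m (Imp (Or \<delta>1 \<delta>2) \<delta>)"
        using disj_closed[OF \<open>\<delta>1 \<in> \<Delta>\<close> \<open>\<delta>2 \<in> \<Delta>\<close>] by blast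
      ultimately have "deriv_from m T \<delta>"
        using deriv_from_disj_mono[OF _ _ closed_T] deriv_from.hyp[OF \<open>Or B C \<in> T\<close>]
        by (meson deriv_from.mp deriv_from.derivable)
      then show False
        using avoids \<open>\<delta> \<in> \<Delta>\<close> by blast
    qed
  next
    obtain \<delta> where "\<delta> \<in> \<Delta>"
      using assms(1) by blast
    then show "Bot \<notin> T"
      using avoids deriv_from.mp[OF deriv_from.derivable[OF deriv_Bot_imp] deriv_from.hyp] closed
      by blast
  qed (fact closed_T)
  moreover have "\<Delta> \<inter> T = {}"
    using avoids deriv_from.hyp by (metis disjoint_iff)
  ultimately show thesis
    using that by blast
qed

section \<open>Interpreting \<epsilon>- and \<tau>-terms in a prime theory\<close>

definition etfree_terms :: "('f, 'p) tm set" where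
  "etfree_terms = {t. etfree_tm t \<and> closed_tm 0 t}"

lemma FVar_etfree_terms [simp]: "FVar x \<in> etfree_terms"
  by (simp add: etfree_terms_def)

definition greatest_witness :: "('f, 'p) fm set \<Rightarrow> (('f, 'p) tm \<Rightarrow> ('f, 'p) fm) \<Rightarrow> ('f, 'p) tm" where
  "greatest_witness T f = (SOME d. d \<in> etfree_terms \<and> (\<forall>d'\<in>etfree_terms. Imp (f d') (f d) \<in> T))"

definition least_witness :: "('f, 'p) fm set \<Rightarrow> (('f, 'p) tm \<Rightarrow> ('f, 'p) fm) \<Rightarrow> ('f, 'p) tm" where
  "least_witness T f = (SOME d. d \<in> etfree_terms \<and> (\<forall>d'\<in>etfree_terms. Imp (f d) (f d') \<in> T))"

text \<open>\<open>env\<close> lists the values of the bound variables, innermost first; a dangling index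
  gets the junk value \<open>FVar 0\<close>.\<close>

primrec eval_tm :: "('f, 'p) fm set \<Rightarrow> ('f, 'p) tm list \<Rightarrow> ('f, 'p) tm \<Rightarrow> ('f, 'p) tm"
  and eval_fm :: "('f, 'p) fm set \<Rightarrow> ('f, 'p) tm list \<Rightarrow> ('f, 'p) fm \<Rightarrow> ('f, 'p) fm" where
  "eval_tm T env (FVar x) = FVar x"
| "eval_tm T env (BVar i) = (if i < length env then env ! i else FVar 0)"
| "eval_tm T env (Fn f ts) = Fn f (map (eval_tm T env) ts)"
| "eval_tm T env (Eps A) = greatest_witness T (\<lambda>d. eval_fm T (d # env) A)"
| "eval_tm T env (Tau A) = least_witness T (\<lambda>d. eval_fm T (d # env) A)"
| "eval_fm T env Bot = Bot"
| "eval_fm T env (Atom p ts) = Atom p (map (eval_tm T env) ts)"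
| "eval_fm T env (And A B) = And (eval_fm T env A) (eval_fm T env B)"
| "eval_fm T env (Or A B) = Or (eval_fm T env A) (eval_fm T env B)"
| "eval_fm T env (Imp A B) = Imp (eval_fm T env A) (eval_fm T env B)"

lemma eval_append_env:
  fixes t :: "('f, 'p) tm" and F :: "('f, 'p) fm"
  shows "closed_tm k t \<Longrightarrow> k \<le> length env \<Longrightarrow> eval_tm T (env @ env') t = eval_tm T env t"
    and "closed_fm k F \<Longrightarrow> k \<le> length env \<Longrightarrow> eval_fm T (env @ env') F = eval_fm T env F"
proof (induct t and F arbitrary: k env and k env)
  case (Eps A)
  then have "eval_fm T ((d # env) @ env') A = eval_fm T (d # env) A" for d
    by (metis Suc_le_mono closed_tm.simps(4) length_Cons)
  then show ?case
    by simp
next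
  case (Tau A)
  then have "eval_fm T ((d # env) @ env') A = eval_fm T (d # env) A" for d
    by (metis Suc_le_mono closed_tm.simps(5) length_Cons)
  then show ?case
    by simp
qed (auto simp: list_all_iff nth_append)

lemma eval_closed_tm: "closed_tm 0 u \<Longrightarrow> eval_tm T env u = eval_tm T [] u"
  using eval_append_env(1)[of 0 u "[]" T env] by simp

lemma eval_inst:
  fixes t :: "('f, 'p) tm" and F :: "('f, 'p) fm"
  assumes "closed_tm 0 u"
  shows "closed_tm (Suc k) t \<Longrightarrow> length env = k \<Longrightarrow>
      eval_tm T env (inst_tm k u t) = eval_tm T (env @ [eval_tm T [] u]) t"
    and "closed_fm (Suc k) F \<Longrightarrow> length env = k \<Longrightarrow>
      eval_fm T env (inst_fm k u F) = eval_fm T (env @ [eval_tm T [] u]) F"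
proof (induct t and F arbitrary: k env and k env)
  case (BVar i)
  then show ?case
    using eval_closed_tm[OF assms] by (auto simp: nth_append)
next
  case (Eps A)
  then have "eval_fm T (d # env) (inst_fm (Suc k) u A) = eval_fm T ((d # env) @ [eval_tm T [] u]) A" for d
    by (metis closed_tm.simps(4) length_Cons)
  then show ?case
    by simp
next
  case (Tau A)
  then have "eval_fm T (d # env) (inst_fm (Suc k) u A) = eval_fm T ((d # env) @ [eval_tm T [] u]) A" for d
    by (metis closed_tm.simps(5) length_Cons)
  then show ?case
    by simp
qed (auto simp: list_all_iff)

lemma eval_inst0:
  "closed_fm 1 A \<Longrightarrow> closed_tm 0 u \<Longrightarrow> eval_fm T [] (inst_fm 0 u A) = eval_fm T [eval_tm T [] u] A"
  using eval_inst(2)[of u 0 A "[]" T] by simp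

lemma eval_psub: "eval_fm T env (psub \<sigma> \<phi>) = psub (\<lambda>n. eval_fm T env (\<sigma> n)) \<phi>"
  by (induction \<phi>) auto

lemma eval_subst_etfree:
  fixes t :: "('f, 'p) tm" and A :: "('f, 'p) fm"
  shows "etfree_tm t \<Longrightarrow> closed_tm 0 t \<Longrightarrow>
      eval_tm T env (subst_tm \<sigma> t) = subst_tm (\<lambda>x. eval_tm T env (\<sigma> x)) t"
    and "etfree_fm A \<Longrightarrow> closed_fm 0 A \<Longrightarrow>
      eval_fm T env (subst_fm \<sigma> A) = subst_fm (\<lambda>x. eval_tm T env (\<sigma> x)) A"
  by (induct t and A) (auto simp: list_all_iff)

lemma subst_list_map:
  assumes "\<And>x. f (FVar x) = FVar x"
  shows "(\<lambda>x. f (subst_list xs ts x)) = subst_list xs (map f ts)"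
  using assms by (auto simp: subst_list_def zip_map2 map_of_map split: option.split)

context prime_theory
begin

lemma greatest_witness:
  assumes "\<And>d. d \<in> etfree_terms \<Longrightarrow> closed_fm 0 (f d)"
  shows "greatest_witness T f \<in> etfree_terms"
    and "d \<in> etfree_terms \<Longrightarrow> Imp (f d) (f (greatest_witness T f)) \<in> T"
proof -
  have "\<exists>X\<in>f ` etfree_terms. \<forall>Y\<in>f ` etfree_terms. Imp Y X \<in> T"
    using assms by (intro ex_greatest_mem[of "f (FVar 0)"]) auto
  then have "\<exists>d. d \<in> etfree_terms \<and> (\<forall>d'\<in>etfree_terms. Imp (f d') (f d) \<in> T)"
    by auto
  from someI_ex[OF this] show "greatest_witness T f \<in> etfree_terms"
    and "d \<in> etfree_terms \<Longrightarrow> Imp (f d) (f (greatest_witness T f)) \<in> T"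
    unfolding greatest_witness_def by blast+
qed

lemma least_witness:
  assumes "\<And>d. d \<in> etfree_terms \<Longrightarrow> closed_fm 0 (f d)"
  shows "least_witness T f \<in> etfree_terms"
    and "d \<in> etfree_terms \<Longrightarrow> Imp (f (least_witness T f)) (f d) \<in> T"
proof -
  have "\<exists>X\<in>f ` etfree_terms. \<forall>Y\<in>f ` etfree_terms. Imp X Y \<in> T"
    using assms by (intro ex_least_mem[of "f (FVar 0)"]) auto
  then have "\<exists>d. d \<in> etfree_terms \<and> (\<forall>d'\<in>etfree_terms. Imp (f d) (f d') \<in> T)"
    by auto
  from someI_ex[OF this] show "least_witness T f \<in> etfree_terms"
    and "d \<in> etfree_terms \<Longrightarrow> Imp (f (least_witness T f)) (f d) \<in> T"
    unfolding least_witness_def by blast+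
qed

lemma eval_etfree_closed:
  fixes t :: "('f, 'p) tm" and F :: "('f, 'p) fm"
  shows "set env \<subseteq> etfree_terms \<Longrightarrow> eval_tm T env t \<in> etfree_terms"
    and "set env \<subseteq> etfree_terms \<Longrightarrow> closed_fm 0 (eval_fm T env F)"
proof (induct t and F arbitrary: env and env)
  case (BVar i)
  then show ?case
    by (auto dest: nth_mem)
next
  case (Eps A)
  then show ?case
    by (simp add: greatest_witness(1))
next
  case (Tau A)
  then show ?case
    by (simp add: least_witness(1))
qed (auto simp: etfree_terms_def list_all_iff)

lemma eval_mem_if_deriv_et: "deriv_et m F \<Longrightarrow> eval_fm T [] F \<in> T"
proof (induction rule: deriv.induct)
  case (crit_eps A t)
  have "closed_fm 0 (eval_fm T [d] A)" if "d \<in> etfree_terms" for d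
    using that by (intro eval_etfree_closed) simp
  then have "Imp (eval_fm T [eval_tm T [] t] A) (eval_fm T [greatest_witness T (\<lambda>d. eval_fm T [d] A)] A) \<in> T"
    using greatest_witness(2)[of "\<lambda>d. eval_fm T [d] A"] eval_etfree_closed(1)[of "[]"] by simp
  then show ?case
    using crit_eps by (simp add: eval_inst0)
next
  case (crit_tau A t)
  have "closed_fm 0 (eval_fm T [d] A)" if "d \<in> etfree_terms" for d
    using that by (intro eval_etfree_closed) simp
  then have "Imp (eval_fm T [least_witness T (\<lambda>d. eval_fm T [d] A)] A) (eval_fm T [eval_tm T [] t] A) \<in> T"
    using least_witness(2)[of "\<lambda>d. eval_fm T [d] A"] eval_etfree_closed(1)[of "[]"] by simp
  then show ?case
    using crit_tau by (simp add: eval_inst0)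
next
  case (inst \<phi> \<sigma>)
  have "deriv_L m (psub (\<lambda>n. eval_fm T [] (\<sigma> n)) \<phi>)"
    using inst.hyps(1) by (rule deriv.inst) (simp add: eval_etfree_closed)
  then show ?case
    by (simp add: eval_psub derivable_mem)
next
  case (mp A B)
  then show ?case
    by (auto intro: mp_mem)
qed

lemma ex_etfree_instance_mem:
  assumes "etfree_fm A" and "closed_fm 0 A" and "deriv_et m (subst_fm (subst_list xs es) A)"
  shows "\<exists>ts. length ts = length es \<and> set ts \<subseteq> etfree_terms \<and> subst_fm (subst_list xs ts) A \<in> T"
proof (intro exI conjI)
  let ?ts = "map (eval_tm T []) es"
  show "length ?ts = length es"
    by simp
  show "set ?ts \<subseteq> etfree_terms"
    using eval_etfree_closed(1)[of "[]"] by auto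
  have "eval_fm T [] (subst_fm (subst_list xs es) A) = subst_fm (\<lambda>x. eval_tm T [] (subst_list xs es x)) A"
    using assms(1,2) by (rule eval_subst_etfree(2))
  also have "(\<lambda>x. eval_tm T [] (subst_list xs es x)) = subst_list xs ?ts"
    by (rule subst_list_map) simp
  finally show "subst_fm (subst_list xs ?ts) A \<in> T"
    using eval_mem_if_deriv_et[OF assms(3)] by simp
qed

end

lemma subst_list_cases: "subst_list xs ts x \<in> set ts \<or> subst_list xs ts x = FVar x"
  by (auto simp: subst_list_def split: option.split dest: map_of_SomeD set_zip_rightD)

lemma closed_subst_list:
  "set ts \<subseteq> etfree_terms \<Longrightarrow> closed_fm 0 A \<Longrightarrow> closed_fm 0 (subst_fm (subst_list xs ts) A)"
proof (rule closed_subst(2))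
  show "closed_tm 0 (subst_list xs ts x)" if "set ts \<subseteq> etfree_terms" for x
    using subst_list_cases[of xs ts x] that by (auto simp: etfree_terms_def)
qed

definition instance_disjunctions :: "nat list \<Rightarrow> ('f, 'p) fm \<Rightarrow> ('f, 'p) fm set" where
  "instance_disjunctions xs A =
    {bigOr (map (\<lambda>ts. subst_fm (subst_list xs ts) A) tss) | tss. tss \<noteq> [] \<and>
      (\<forall>ts\<in>set tss. length ts = length xs \<and> set ts \<subseteq> etfree_terms)}"

lemma instance_mem_instance_disjunctions:
  "length ts = length xs \<Longrightarrow> set ts \<subseteq> etfree_terms \<Longrightarrow>
    subst_fm (subst_list xs ts) A \<in> instance_disjunctions xs A"
  unfolding instance_disjunctions_def by (rule CollectI, rule exI[of _ "[ts]"]) simp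

lemma instance_disjunctions_closed:
  "closed_fm 0 A \<Longrightarrow> \<delta> \<in> instance_disjunctions xs A \<Longrightarrow> closed_fm 0 \<delta>"
  unfolding instance_disjunctions_def
  by (auto intro!: closed_bigOr simp: list_all_iff closed_subst_list)

lemma instance_disjunctions_Or:
  assumes "closed_fm 0 A" and "\<delta>1 \<in> instance_disjunctions xs A" and "\<delta>2 \<in> instance_disjunctions xs A"
  shows "\<exists>\<delta>\<in>instance_disjunctions xs A. deriv_L m (Imp (Or \<delta>1 \<delta>2) \<delta>)"
proof -
  let ?I = "\<lambda>ts. subst_fm (subst_list xs ts) A"
  obtain tss1 where \<delta>1: "\<delta>1 = bigOr (map ?I tss1)" and "tss1 \<noteq> []"
    and good1: "\<forall>ts\<in>set tss1. length ts = length xs \<and> set ts \<subseteq> etfree_terms"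
    using assms(2) unfolding instance_disjunctions_def by blast
  obtain tss2 where \<delta>2: "\<delta>2 = bigOr (map ?I tss2)"
    and good2: "\<forall>ts\<in>set tss2. length ts = length xs \<and> set ts \<subseteq> etfree_terms"
    using assms(3) unfolding instance_disjunctions_def by blast
  have "bigOr (map ?I (tss1 @ tss2)) \<in> instance_disjunctions xs A"
    using \<open>tss1 \<noteq> []\<close> good1 good2 unfolding instance_disjunctions_def
    by (intro CollectI exI[of _ "tss1 @ tss2"]) auto
  moreover have "deriv_L m (Imp (Or \<delta>1 \<delta>2) (bigOr (map ?I (tss1 @ tss2))))"
    unfolding \<delta>1 \<delta>2 map_append using good1 good2 assms(1)
    by (intro deriv_Or_bigOr_append) (auto simp: list_all_iff closed_subst_list)
  ultimately show ?thesis
    by blast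
qed

theorem mainTheorem4:
  fixes m :: nat
    and A :: "('f, 'p) fm"
    and xs :: "nat list"
    and es :: "('f, 'p) tm list"
  assumes "m \<ge> 1"
    and "etfree_fm A" and "closed_fm 0 A"
    and "distinct xs" and "length es = length xs"
    and "\<forall>e\<in>set es. is_et_term e \<and> closed_tm 0 e"
    and "deriv_et m (subst_fm (subst_list xs es) A)"
  shows "\<exists>tss. tss \<noteq> [] \<and>
           (\<forall>ts\<in>set tss. length ts = length xs \<and>
              (\<forall>t\<in>set ts. etfree_tm t \<and> closed_tm 0 t)) \<and>
           deriv_L m (bigOr (map (\<lambda>ts. subst_fm (subst_list xs ts) A) tss))"
proof (rule ccontr)
  assume none: "\<not> ?thesis"
  let ?\<Delta> = "instance_disjunctions xs A"
  have "?\<Delta> \<noteq> {}"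
    using instance_mem_instance_disjunctions[of "map FVar xs" xs A] by fastforce
  moreover have "\<not> deriv_L m \<delta>" if "\<delta> \<in> ?\<Delta>" for \<delta>
    using that none by (auto simp: instance_disjunctions_def etfree_terms_def subset_iff)
  ultimately obtain T where "prime_theory m T" and "?\<Delta> \<inter> T = {}"
    using lindenbaum instance_disjunctions_closed[OF assms(3)] instance_disjunctions_Or[OF assms(3)]
    by metis
  moreover obtain ts where "length ts = length xs" "set ts \<subseteq> etfree_terms"
    and "subst_fm (subst_list xs ts) A \<in> T"
    using prime_theory.ex_etfree_instance_mem[OF \<open>prime_theory m T\<close> assms(2,3,7)] assms(5) by auto
  ultimately show False
    using instance_mem_instance_disjunctions by blast
qed

end
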